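(* The functor $\vec{\mathrm{Sp}}$ from the category of multipointed $d$-spaces to the category of directed spaces is a left adjoint. Its right adjoint is the functor $\vec{\Omega}$ from directed spaces to multipointed $d$-spaces which takes a directed space $(|Y|,d(Y))$ to the multipointed $d$-space $(|Y|,|Y|,d(Y))$ (all points are states and the execution paths are the directed paths), and acts as the identity on underlying continuous maps.
   Context: Let $\mathbf{Top}$ be the category of $\Delta$-generated spaces (or of $\Delta$-Hausdorff $\Delta$-generated spaces). For $\ell>0$ let $\mu_\ell(t)=t/\ell$, $\mu_\ell:[0,\ell]\to[0,1]$. $\mathcal{M}(\ell,\ell')$ is the set of non-decreasing surjective continuous maps $[0,\ell]\to[0,\ell']$; $\mathcal{I}(\ell)$ is the set of non-decreasing continuous maps $[0,1]\to[0,\ell]$ (constant maps allowed). The Moore composition of paths $\gamma_1:[0,\ell_1]\to U$, $\gamma_2:[0,\ell_2]\to U$ with $\gamma_1(\ell_1)=\gamma_2(0)$ is $\gamma_1*\gamma_2:[0,\ell_1+\ell_2]\to U$, equal to $\gamma_1(t)$ on $[0,\ell_1]$ and $\gamma_2(t-\ell_1)$ on $[\ell_1,\ell_1+\ell_2]$. The normalized composition of $\gamma_1,\gamma_2:[0,1]\to U$ is $\gamma_1*_N\gamma_2=(\gamma_1\mu_{1/2})*(\gamma_2\mu_{1/2})$. A multipointed $d$-space is a triple $X=(|X|,X^0,\mathbb{P}^{\mathrm{top}}X)$: a space $|X|$, a subset $X^0\subset|X|$ of states, and a set $\mathbb{P}^{\mathrm{top}}X$ of continuous maps $[0,1]\to|X|$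 (execution paths) with endpoints in $X^0$, closed under precomposition by elements of $\mathcal{M}(1,1)$ and under normalized composition. Maps are continuous maps preserving states and execution paths. A directed space is a pair $Y=(|Y|,d(Y))$ with $d(Y)$ a set of continuous maps $[0,1]\to|Y|$ containing the constant paths, closed under normalized composition and under precomposition by elements of $\mathcal{I}(1)$; morphisms are continuous maps preserving directed paths. For a multipointed $d$-space $X$, $\vec{\mathrm{Sp}}(X)$ is the directed space $(|X|,d(X))$ where $d(X)$ consists of all constant paths and all Moore compositions $(\gamma_1\phi_1\mu_{\ell_1})*\dots*(\gamma_n\phi_n\mu_{\ell_n})$ with $n\ge1$, $\ell_i>0$, $\sum_i\ell_i=1$, $\gamma_i$ execution paths of $X$ and $\phi_i\in\mathcal{I}(1)$; on maps, $\vec{\mathrm{Sp}}$ is the identity on underlying continuous maps. *)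

theory Defs
  imports "HOL-Analysis.Analysis" "HOL-Homology.Homology"
begin

definition simplex_top :: "nat \<Rightarrow> (nat \<Rightarrow> real) topology" where
  "simplex_top n = subtopology (powertop_real UNIV) (standard_simplex n)"

definition delta_generated :: "'a topology \<Rightarrow> bool" where
  "delta_generated X \<longleftrightarrow>
     (\<forall>U. U \<subseteq> topspace X \<longrightarrow>
        (openin X U \<longleftrightarrow>
          (\<forall>n \<sigma>. continuous_map (simplex_top n) X \<sigma> \<longrightarrow>
              openin (simplex_top n) {x \<in> topspace (simplex_top n). \<sigma> x \<in> U})))"

text \<open>A path [0,1] -> |X| is represented by a function real => 'a; only its values on
  [0,1] matter. Membership of a path in a set of paths is therefore taken modulo
  agreement on [0,1].\<close>
definition path_in :: "(real \<Rightarrow> 'a) \<Rightarrow> (real \<Rightarrow> 'a) set \<Rightarrow> bool" where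
  "path_in \<gamma> P \<longleftrightarrow> (\<exists>\<delta>\<in>P. \<forall>t\<in>{0..1}. \<gamma> t = \<delta> t)"

definition is_path :: "'a topology \<Rightarrow> (real \<Rightarrow> 'a) \<Rightarrow> bool" where
  "is_path X \<gamma> \<longleftrightarrow> continuous_map (top_of_set {0..1}) X \<gamma>"

definition M11 :: "(real \<Rightarrow> real) \<Rightarrow> bool" where
  "M11 \<phi> \<longleftrightarrow> mono_on {0..1} \<phi> \<and> \<phi> ` {0..1} = {0..1} \<and> continuous_on {0..1} \<phi>"

definition I1 :: "(real \<Rightarrow> real) \<Rightarrow> bool" where
  "I1 \<phi> \<longleftrightarrow> mono_on {0..1} \<phi> \<and> \<phi> ` {0..1} \<subseteq> {0..1} \<and> continuous_on {0..1} \<phi>"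

definition ncomp :: "(real \<Rightarrow> 'a) \<Rightarrow> (real \<Rightarrow> 'a) \<Rightarrow> real \<Rightarrow> 'a" where
  "ncomp \<gamma>1 \<gamma>2 = (\<lambda>t. if t \<le> 1/2 then \<gamma>1 (2 * t) else \<gamma>2 (2 * t - 1))"

text \<open>Moore composition of a nonempty list of pairs (c_i, l_i), c_i : [0,1] -> U,
  of the paths c_i mu_{l_i} : [0,l_i] -> U.\<close>
fun moore :: "((real \<Rightarrow> 'a) \<times> real) list \<Rightarrow> real \<Rightarrow> 'a" where
  "moore [] = (\<lambda>t. undefined)"
| "moore [(c, l)] = (\<lambda>t. c (t / l))"
| "moore ((c, l) # rest) = (\<lambda>t. if t \<le> l then c (t / l) else moore rest (t - l))"

definition composable :: "((real \<Rightarrow> 'a) \<times> real) list \<Rightarrow> bool" where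
  "composable cs \<longleftrightarrow>
     (\<forall>i. Suc i < length cs \<longrightarrow> fst (cs ! i) 1 = fst (cs ! Suc i) 0)"

type_synonym 'a mdspace = "'a topology \<times> 'a set \<times> (real \<Rightarrow> 'a) set"

definition mdspace :: "'a mdspace \<Rightarrow> bool" where
  "mdspace X \<longleftrightarrow> (case X of (T, S, P) \<Rightarrow>
     delta_generated T \<and> S \<subseteq> topspace T \<and>
     (\<forall>\<gamma>\<in>P. is_path T \<gamma> \<and> \<gamma> 0 \<in> S \<and> \<gamma> 1 \<in> S) \<and>
     (\<forall>\<gamma>\<in>P. \<forall>\<phi>. M11 \<phi> \<longrightarrow> path_in (\<gamma> \<circ> \<phi>) P) \<and>
     (\<forall>\<gamma>1\<in>P. \<forall>\<gamma>2\<in>P. \<gamma>1 1 = \<gamma>2 0 \<longrightarrow> path_in (ncomp \<gamma>1 \<gamma>2) P))"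

definition mdmap :: "'a mdspace \<Rightarrow> 'b mdspace \<Rightarrow> ('a \<Rightarrow> 'b) \<Rightarrow> bool" where
  "mdmap X Y f \<longleftrightarrow> (case X of (T, S, P) \<Rightarrow> case Y of (T', S', P') \<Rightarrow>
     continuous_map T T' f \<and> f ` S \<subseteq> S' \<and> (\<forall>\<gamma>\<in>P. path_in (f \<circ> \<gamma>) P'))"

type_synonym 'a dspace = "'a topology \<times> (real \<Rightarrow> 'a) set"

definition dspace :: "'a dspace \<Rightarrow> bool" where
  "dspace Y \<longleftrightarrow> (case Y of (T, D) \<Rightarrow>
     delta_generated T \<and>
     (\<forall>\<gamma>\<in>D. is_path T \<gamma>) \<and>
     (\<forall>x\<in>topspace T. path_in (\<lambda>t. x) D) \<and>
     (\<forall>\<gamma>\<in>D. \<forall>\<phi>. I1 \<phi> \<longrightarrow> path_in (\<gamma> \<circ> \<phi>) D) \<and>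
     (\<forall>\<gamma>1\<in>D. \<forall>\<gamma>2\<in>D. \<gamma>1 1 = \<gamma>2 0 \<longrightarrow> path_in (ncomp \<gamma>1 \<gamma>2) D))"

definition dmap :: "'a dspace \<Rightarrow> 'b dspace \<Rightarrow> ('a \<Rightarrow> 'b) \<Rightarrow> bool" where
  "dmap X Y f \<longleftrightarrow> (case X of (T, D) \<Rightarrow> case Y of (T', D') \<Rightarrow>
     continuous_map T T' f \<and> (\<forall>\<gamma>\<in>D. path_in (f \<circ> \<gamma>) D'))"

definition sp_paths :: "'a topology \<Rightarrow> (real \<Rightarrow> 'a) set \<Rightarrow> (real \<Rightarrow> 'a) set" where
  "sp_paths T P =
     {(\<lambda>t. x) | x. x \<in> topspace T} \<union>
     {moore cs | cs. cs \<noteq> [] \<and>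
        (\<forall>(c, l)\<in>set cs. 0 < l \<and> (\<exists>\<gamma>\<in>P. \<exists>\<phi>. I1 \<phi> \<and> c = \<gamma> \<circ> \<phi>)) \<and>
        sum_list (map snd cs) = 1 \<and> composable cs}"

definition Sp :: "'a mdspace \<Rightarrow> 'a dspace" where
  "Sp X = (case X of (T, S, P) \<Rightarrow> (T, sp_paths T P))"

definition Omega :: "'a dspace \<Rightarrow> 'a mdspace" where
  "Omega Y = (case Y of (T, D) \<Rightarrow> (T, topspace T, D))"

end

theory Submission
  imports Defs
begin

text \<open>A set of paths closed under I(1)-reparametrization and
  normalized composition is also closed under composition with an arbitrary breakpoint
  \<open>r \<in> (0,1)\<close>: reparametrize the normalized composition piecewise linearly, sending \<open>r\<close> to
  \<open>1/2\<close>. Since a Moore composition arises from its pieces by finitely many such compositions,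
  a continuous map sends the directed paths of \<open>Sp X\<close> to directed paths of \<open>Y\<close> as soon as it
  sends the execution paths of \<open>X\<close> to them, which is the adjunction. That \<open>Sp X\<close> is closed
  under I(1)-reparametrization is proved by induction on the number of pieces: a monotone
  reparametrization of a composition of two paths is split, at a point mapped to the breakpoint,
  into reparametrizations of the two paths.\<close>

definition concat_at :: "real \<Rightarrow> (real \<Rightarrow> 'a) \<Rightarrow> (real \<Rightarrow> 'a) \<Rightarrow> real \<Rightarrow> 'a" where
  "concat_at s a b = (\<lambda>t. if t \<le> s then a (t / s) else b ((t - s) / (1 - s)))"

lemma ncomp_eq_concat_at: "ncomp a b = concat_at (1/2) a b"
proof -
  have "(t - 1/2) / (1 - 1/2) = 2 * t - 1" for t :: real
    by (simp add: field_simps)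
  then show ?thesis
    by (simp add: ncomp_def concat_at_def fun_eq_iff mult.commute)
qed

lemma comp_concat_at: "f \<circ> concat_at s a b = concat_at s (f \<circ> a) (f \<circ> b)"
  by (simp add: concat_at_def fun_eq_iff)

lemma concat_at_cong:
  assumes "0 < s" "s < 1" "\<forall>t\<in>{0..1}. a t = a' t" "\<forall>t\<in>{0..1}. b t = b' t"
  shows "\<forall>t\<in>{0..1}. concat_at s a b t = concat_at s a' b' t"
  using assms by (auto simp: concat_at_def)

lemma composable_Nil [simp]: "composable []"
  and composable_single [simp]: "composable [x]"
  by (auto simp: composable_def)

lemma composable_Cons2 [simp]:
  "composable (x # y # r) \<longleftrightarrow> fst x 1 = fst y 0 \<and> composable (y # r)"
  unfolding composable_def
proof safe
  fix i
  assume "\<forall>i. Suc i < length (x # y # r) \<longrightarrow> fst ((x # y # r) ! i) 1 = fst ((x # y # r) ! Suc i) 0"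
  then show "fst x 1 = fst y 0"
    and "Suc i < length (y # r) \<Longrightarrow> fst ((y # r) ! i) 1 = fst ((y # r) ! Suc i) 0"
    by (auto dest: spec[of _ 0] spec[of _ "Suc i"])
next
  fix i
  assume "fst x 1 = fst y 0" "Suc i < length (x # y # r)"
    "\<forall>i. Suc i < length (y # r) \<longrightarrow> fst ((y # r) ! i) 1 = fst ((y # r) ! Suc i) 0"
  then show "fst ((x # y # r) ! i) 1 = fst ((x # y # r) ! Suc i) 0"
    by (cases i) auto
qed

lemma composable_Cons: "composable (x # r) \<longleftrightarrow> (r = [] \<or> fst x 1 = fst (hd r) 0) \<and> composable r"
  by (cases r) auto

lemma composable_append:
  "xs \<noteq> [] \<Longrightarrow> ys \<noteq> [] \<Longrightarrow>
    composable (xs @ ys) \<longleftrightarrow> composable xs \<and> composable ys \<and> fst (last xs) 1 = fst (hd ys) 0"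
  by (induction xs rule: induct_list012) (auto simp: composable_Cons)

definition rescale :: "real \<Rightarrow> ((real \<Rightarrow> 'a) \<times> real) list \<Rightarrow> ((real \<Rightarrow> 'a) \<times> real) list" where
  "rescale a cs = map (\<lambda>(c, l). (c, a * l)) cs"

lemma rescale_Nil_iff [simp]: "rescale a cs = [] \<longleftrightarrow> cs = []"
  by (simp add: rescale_def)

lemma ball_fst_rescale [simp]: "(\<forall>x\<in>set (rescale a cs). R (fst x)) \<longleftrightarrow> (\<forall>x\<in>set cs. R (fst x))"
  by (auto simp: rescale_def)

lemma lengths_pos_rescale [simp]:
  "0 < a \<Longrightarrow> (\<forall>x\<in>set (rescale a cs). 0 < snd x) \<longleftrightarrow> (\<forall>x\<in>set cs. 0 < (snd x :: real))"
  by (auto simp: rescale_def zero_less_mult_iff)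

lemma hd_rescale [simp]: "fst (hd (rescale a cs)) = fst (hd cs)"
  by (cases cs) (auto simp: rescale_def)

lemma last_rescale [simp]: "fst (last (rescale a cs)) = fst (last cs)"
  by (induction cs rule: induct_list012) (auto simp: rescale_def)

lemma composable_rescale [simp]: "composable (rescale a cs) \<longleftrightarrow> composable cs"
  by (induction cs rule: induct_list012) (auto simp: rescale_def)

lemma sum_rescale [simp]: "sum_list (map snd (rescale a cs)) = a * sum_list (map snd cs)"
  by (induction cs) (auto simp: rescale_def algebra_simps)

lemma moore_rescale: "0 < a \<Longrightarrow> moore (rescale a cs) t = moore cs (t / a)"
proof (induction cs arbitrary: t rule: moore.induct)
  case (3 c l v va)
  have "t \<le> a * l \<longleftrightarrow> t / a \<le> l" and "(t - a * l) / a = t / a - l"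
    using "3.prems" by (simp_all add: pos_divide_le_eq mult.commute diff_divide_distrib)
  then show ?case
    using 3 by (simp add: rescale_def)
qed (auto simp: rescale_def)

definition moore_chain :: "((real \<Rightarrow> 'a) \<times> real) list \<Rightarrow> bool" where
  "moore_chain cs \<longleftrightarrow>
     cs \<noteq> [] \<and> (\<forall>x\<in>set cs. 0 < snd x) \<and> sum_list (map snd cs) = 1 \<and> composable cs"

lemma sum_lengths_pos:
  assumes "cs \<noteq> []" "\<forall>x\<in>set cs. 0 < (snd x :: real)"
  shows "0 < sum_list (map snd cs)"
proof -
  have "0 < snd (hd cs)"
    using assms by simp
  also have "\<dots> \<le> sum_list (map snd cs)"
    using assms by (intro member_le_sum_list) (auto simp: less_imp_le)
  finally show ?thesis .
qed

lemma moore_append: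
  assumes "xs \<noteq> []" "ys \<noteq> []" "\<forall>x\<in>set xs. 0 < snd x"
  shows "moore (xs @ ys) t =
    (if t \<le> sum_list (map snd xs) then moore xs t else moore ys (t - sum_list (map snd xs)))"
  using assms
proof (induction xs arbitrary: t rule: moore.induct)
  case (2 c l)
  then show ?case by (cases ys) auto
next
  case (3 c l v va)
  have "0 < sum_list (map snd (v # va))"
    using "3.prems" by (intro sum_lengths_pos) auto
  with 3 show ?case by (auto simp: algebra_simps)
qed auto

lemma moore_start: "cs \<noteq> [] \<Longrightarrow> \<forall>x\<in>set cs. 0 < snd x \<Longrightarrow> moore cs 0 = fst (hd cs) 0"
  by (induction cs rule: moore.induct) auto

lemma moore_end:
  "cs \<noteq> [] \<Longrightarrow> \<forall>x\<in>set cs. 0 < snd x \<Longrightarrow> moore cs (sum_list (map snd cs)) = fst (last cs) 1"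
proof (induction cs rule: moore.induct)
  case (3 c l v va)
  have "0 < sum_list (map snd (v # va))"
    using "3.prems" by (intro sum_lengths_pos) auto
  with "3.IH"[of "l + 1"] "3.prems" show ?case by auto
qed auto

lemma moore_chain_ends:
  assumes "moore_chain cs"
  shows "moore cs 0 = fst (hd cs) 0" "moore cs 1 = fst (last cs) 1"
  using assms moore_start[of cs] moore_end[of cs] by (auto simp: moore_chain_def)

lemma moore_chain_single: "moore_chain [(c, l)] \<longleftrightarrow> l = 1"
  by (auto simp: moore_chain_def)

lemma moore_chain_ConsD:
  assumes chain: "moore_chain ((c, l) # r)" and "r \<noteq> []"
  defines "r' \<equiv> rescale (1 / (1 - l)) r"
  shows "0 < l" "l < 1" "moore_chain r'" "moore ((c, l) # r) = concat_at l c (moore r')"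
    "c 1 = moore r' 0"
proof -
  have pos: "\<forall>x\<in>set r. 0 < snd x" and sum: "l + sum_list (map snd r) = 1"
    and comp: "composable ((c, l) # r)"
    using chain by (auto simp: moore_chain_def)
  show "0 < l"
    using chain by (auto simp: moore_chain_def)
  moreover show l1: "l < 1"
    using sum sum_lengths_pos[OF \<open>r \<noteq> []\<close> pos] by linarith
  ultimately have a: "0 < 1 / (1 - l)"
    by simp
  show "moore_chain r'"
    using \<open>r \<noteq> []\<close> pos sum l1 comp a
    by (simp add: moore_chain_def r'_def composable_Cons)
  show "moore ((c, l) # r) = concat_at l c (moore r')"
  proof
    fix t
    have "(t - l) / (1 - l) / (1 / (1 - l)) = t - l"
      using l1 by simp
    then show "moore ((c, l) # r) t = concat_at l c (moore r') t"
      using \<open>r \<noteq> []\<close> a by (cases r) (simp_all add: concat_at_def moore_rescale r'_def)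
  qed
  show "c 1 = moore r' 0"
    using a moore_start[OF \<open>r \<noteq> []\<close> pos] comp \<open>r \<noteq> []\<close>
    by (simp add: moore_rescale composable_Cons r'_def)
qed

lemma moore_chain_induct:
  assumes "moore_chain cs" "\<forall>x\<in>set cs. R (fst x)"
    and single: "\<And>c. R c \<Longrightarrow> Q c"
    and concat: "\<And>l c \<rho>. 0 < l \<Longrightarrow> l < 1 \<Longrightarrow> R c \<Longrightarrow> Q \<rho> \<Longrightarrow> c 1 = \<rho> 0 \<Longrightarrow> Q (concat_at l c \<rho>)"
  shows "Q (moore cs)"
  using assms(1,2)
proof (induction "length cs" arbitrary: cs rule: less_induct)
  case less
  obtain c l r where cs: "cs = (c, l) # r"
    using less.prems by (cases cs) (auto simp: moore_chain_def)
  have "R c"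
    using less.prems(2) cs by simp
  show ?case
  proof (cases "r = []")
    case True
    then show ?thesis
      using less.prems(1) cs \<open>R c\<close> single by (simp add: moore_chain_single)
  next
    case False
    note split = moore_chain_ConsD[OF less.prems(1)[unfolded cs] False]
    have "Q (moore (rescale (1 / (1 - l)) r))"
      using less.prems(2) cs split(3) by (intro less.hyps) (auto simp: rescale_def)
    from concat[OF split(1,2) \<open>R c\<close> this split(5)] show ?thesis
      using split(4) cs by simp
  qed
qed

lemma concat_at_moore:
  assumes r: "0 < r" "r < 1" and chains: "moore_chain cs1" "moore_chain cs2"
  shows "concat_at r (moore cs1) (moore cs2) = moore (rescale r cs1 @ rescale (1 - r) cs2)"
proof
  fix t
  have "moore (rescale r cs1 @ rescale (1 - r) cs2) t =
      (if t \<le> r then moore (rescale r cs1) t else moore (rescale (1 - r) cs2) (t - r))"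
    using chains r by (subst moore_append) (auto simp: moore_chain_def)
  then show "concat_at r (moore cs1) (moore cs2) t = moore (rescale r cs1 @ rescale (1 - r) cs2) t"
    using r by (simp add: concat_at_def moore_rescale)
qed

lemma moore_chain_append:
  assumes r: "0 < r" "r < 1" and chains: "moore_chain cs1" "moore_chain cs2"
    and "moore cs1 1 = moore cs2 0"
  shows "moore_chain (rescale r cs1 @ rescale (1 - r) cs2)"
proof -
  have "fst (last (rescale r cs1)) 1 = fst (hd (rescale (1 - r) cs2)) 0"
    using assms moore_chain_ends[OF chains(1)] moore_chain_ends[OF chains(2)] by simp
  then show ?thesis
    using chains r by (simp add: moore_chain_def composable_append ball_Un)
qed

lemma path_in_member: "d \<in> D \<Longrightarrow> path_in d D"
  unfolding path_in_def by auto

lemma path_in_cong: "\<forall>t\<in>{0..1}. p t = p' t \<Longrightarrow> path_in p D \<longleftrightarrow> path_in p' D"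
  unfolding path_in_def by auto

lemma continuous_map_path_comp:
  assumes "is_path T a" "continuous_on A h" "h ` A \<subseteq> {0..1}"
  shows "continuous_map (top_of_set A) T (a \<circ> h)"
proof (rule continuous_map_compose)
  show "continuous_map (top_of_set A) (top_of_set {0..1}) h"
    using assms(2,3) by (simp add: image_subset_iff_funcset)
  show "continuous_map (top_of_set {0..1}) T a"
    using assms(1) by (simp add: is_path_def)
qed

lemma is_path_concat_at:
  assumes s: "0 < s" "s < 1" and paths: "is_path T a" "is_path T b" and "a 1 = b 0"
  shows "is_path T (concat_at s a b)"
proof -
  have left: "continuous_map (top_of_set ({0..1} \<inter> {x. x \<le> s})) T (a \<circ> (\<lambda>t. t / s))"
    by (rule continuous_map_path_comp[OF paths(1)]) (use s in \<open>auto intro!: continuous_intros\<close>)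
  have right: "continuous_map (top_of_set ({0..1} \<inter> {x. s \<le> x})) T (b \<circ> (\<lambda>t. (t - s) / (1 - s)))"
    by (rule continuous_map_path_comp[OF paths(2)])
      (use s in \<open>auto intro!: continuous_intros simp: field_simps\<close>)
  have pieces: "subtopology (top_of_set {0..1}) {x. x \<in> topspace (top_of_set {0..1}) \<and> P x}
      = top_of_set ({0..1} \<inter> Collect P)" for P :: "real \<Rightarrow> bool"
    unfolding subtopology_subtopology by (rule arg_cong[where f="subtopology euclidean"]) auto
  have "continuous_map (top_of_set {0..1}) T
      (\<lambda>t. if t \<le> s then a (t / s) else b ((t - s) / (1 - s)))"
  proof (rule continuous_map_cases_le[where p="\<lambda>x. x" and q="\<lambda>x. s"])
    show "continuous_map (subtopology (top_of_set {0..1})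
        {x. x \<in> topspace (top_of_set {0..1}) \<and> x \<le> s}) T (\<lambda>t. a (t / s))"
      using left unfolding pieces by (simp add: o_def)
    show "continuous_map (subtopology (top_of_set {0..1})
        {x. x \<in> topspace (top_of_set {0..1}) \<and> s \<le> x}) T (\<lambda>t. b ((t - s) / (1 - s)))"
      using right unfolding pieces by (simp add: o_def)
  qed (use s \<open>a 1 = b 0\<close> in auto)
  then show ?thesis
    by (simp add: is_path_def concat_at_def)
qed

lemma I1_iff_mono_path: "I1 \<phi> \<longleftrightarrow> mono_on {0..1} \<phi> \<and> is_path (top_of_set {0..1}) \<phi>"
  by (auto simp: I1_def is_path_def image_subset_iff_funcset)

lemma I1_range: "I1 \<phi> \<Longrightarrow> t \<in> {0..1} \<Longrightarrow> \<phi> t \<in> {0..1}"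
  unfolding I1_def by blast

lemma I1_mono: "I1 \<phi> \<Longrightarrow> x \<in> {0..1} \<Longrightarrow> y \<in> {0..1} \<Longrightarrow> x \<le> y \<Longrightarrow> \<phi> x \<le> \<phi> y"
  unfolding I1_def mono_on_def by blast

lemma I1_const: "a \<in> {0..1} \<Longrightarrow> I1 (\<lambda>_. a)"
  unfolding I1_def by (auto simp: mono_on_def)

lemma I1_id: "I1 (\<lambda>t. t)"
  unfolding I1_def by (auto simp: mono_on_def)

lemma M11_imp_I1: "M11 \<phi> \<Longrightarrow> I1 \<phi>"
  unfolding M11_def I1_def by auto

lemma I1_comp: "I1 \<phi> \<Longrightarrow> I1 \<psi> \<Longrightarrow> I1 (\<phi> \<circ> \<psi>)"
  unfolding I1_def mono_on_def
  by (auto simp: image_subset_iff intro: continuous_on_compose2)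

lemma I1_affine:
  assumes "0 \<le> u" "u \<le> v" "v \<le> 1"
  shows "I1 (\<lambda>t. u + (v - u) * t)"
  unfolding I1_def
proof (intro conjI)
  show "mono_on {0..1} (\<lambda>t. u + (v - u) * t)"
    using assms by (intro mono_onI) (simp add: mult_left_mono)
  have "u + (v - u) * t \<in> {0..1}" if "t \<in> {0..1}" for t
    using that assms mult_left_le[of t "v - u"] by simp
  then show "(\<lambda>t. u + (v - u) * t) ` {0..1} \<subseteq> {0..1}"
    by blast
qed (intro continuous_intros)

lemma I1_normalize:
  assumes "I1 \<phi>" "lo < hi" and bounds: "\<forall>t\<in>{0..1}. lo \<le> \<phi> t \<and> \<phi> t \<le> hi"
  shows "I1 (\<lambda>t. (\<phi> t - lo) / (hi - lo))"
  unfolding I1_def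
proof (intro conjI)
  show "mono_on {0..1} (\<lambda>t. (\<phi> t - lo) / (hi - lo))"
    using \<open>lo < hi\<close> by (intro mono_onI divide_right_mono diff_right_mono I1_mono[OF \<open>I1 \<phi>\<close>]) auto
  show "(\<lambda>t. (\<phi> t - lo) / (hi - lo)) ` {0..1} \<subseteq> {0..1}"
    using bounds \<open>lo < hi\<close> by (auto simp: divide_le_eq_1)
  show "continuous_on {0..1} (\<lambda>t. (\<phi> t - lo) / (hi - lo))"
    using assms by (intro continuous_intros) (auto simp: I1_def)
qed

lemma I1_concat_at:
  assumes s: "0 < s" "s < 1" and "I1 a" "I1 b" "a 1 = b 0"
  shows "I1 (concat_at s a b)"
  unfolding I1_iff_mono_path
proof
  show "is_path (top_of_set {0..1}) (concat_at s a b)"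
    using assms by (intro is_path_concat_at) (simp_all add: I1_iff_mono_path)
  show "mono_on {0..1} (concat_at s a b)"
  proof (rule mono_onI)
    fix x y :: real
    assume "x \<in> {0..1}" "y \<in> {0..1}" "x \<le> y"
    have a_mono: "a (x' / s) \<le> a (y' / s)" if "0 \<le> x'" "x' \<le> y'" "y' \<le> s" for x' y'
      using that s by (intro I1_mono[OF \<open>I1 a\<close>] divide_right_mono) auto
    have b_mono: "b ((x' - s) / (1 - s)) \<le> b ((y' - s) / (1 - s))"
      if "s \<le> x'" "x' \<le> y'" "y' \<le> 1" for x' y'
      using that s by (intro I1_mono[OF \<open>I1 b\<close>] divide_right_mono) auto
    consider "y \<le> s" | "x \<le> s" "s < y" | "s < x"
      using \<open>x \<le> y\<close> by linarith
    then show "concat_at s a b x \<le> concat_at s a b y"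
    proof cases
      case 1
      with a_mono[of x y] \<open>x \<le> y\<close> \<open>x \<in> {0..1}\<close> show ?thesis
        by (simp add: concat_at_def)
    next
      case 2
      have "a (x / s) \<le> a 1" "b 0 \<le> b ((y - s) / (1 - s))"
        using a_mono[of x s] b_mono[of s y] 2 \<open>x \<in> {0..1}\<close> \<open>y \<in> {0..1}\<close> s by simp_all
      with 2 s \<open>a 1 = b 0\<close> show ?thesis
        by (simp add: concat_at_def)
    next
      case 3
      with b_mono[of x y] \<open>x \<le> y\<close> \<open>y \<in> {0..1}\<close> show ?thesis
        by (simp add: concat_at_def)
    qed
  qed
qed

lemma I1_split_at:
  assumes "I1 \<phi>" "0 < r" "r < 1"
  shows "I1 (\<phi> \<circ> (\<lambda>t. r * t))" "I1 (\<phi> \<circ> (\<lambda>t. r + (1 - r) * t))"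
    "\<forall>t\<in>{0..1}. \<phi> (r * t) \<le> \<phi> r" "\<forall>t\<in>{0..1}. \<phi> r \<le> \<phi> (r + (1 - r) * t)"
    "\<forall>t\<in>{0..1}. \<phi> t = concat_at r (\<phi> \<circ> (\<lambda>t. r * t)) (\<phi> \<circ> (\<lambda>t. r + (1 - r) * t)) t"
proof -
  have "I1 (\<lambda>t. r * t)" "I1 (\<lambda>t. r + (1 - r) * t)"
    using I1_affine[of 0 r] I1_affine[of r 1] assms by simp_all
  then show "I1 (\<phi> \<circ> (\<lambda>t. r * t))" "I1 (\<phi> \<circ> (\<lambda>t. r + (1 - r) * t))"
    using I1_comp[OF \<open>I1 \<phi>\<close>] by blast+
  have bounds: "r * t \<in> {0..1}" "r * t \<le> r" "r + (1 - r) * t \<in> {0..1}" "r \<le> r + (1 - r) * t"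
    if "t \<in> {0..1}" for t
  proof -
    have "0 \<le> t" "t \<le> 1"
      using that by simp_all
    then show "r * t \<in> {0..1}" "r * t \<le> r" "r + (1 - r) * t \<in> {0..1}" "r \<le> r + (1 - r) * t"
      unfolding atLeastAtMost_iff
      using mult_left_le[of t r] mult_left_le[of t "1 - r"] mult_nonneg_nonneg[of r t]
        mult_nonneg_nonneg[of "1 - r" t] assms
      by linarith+
  qed
  have "r \<in> {0..1}"
    using assms by simp
  show "\<forall>t\<in>{0..1}. \<phi> (r * t) \<le> \<phi> r"
    using I1_mono[OF \<open>I1 \<phi>\<close> bounds(1) \<open>r \<in> {0..1}\<close> bounds(2)] by blast
  show "\<forall>t\<in>{0..1}. \<phi> r \<le> \<phi> (r + (1 - r) * t)"
    using I1_mono[OF \<open>I1 \<phi>\<close> \<open>r \<in> {0..1}\<close> bounds(3) bounds(4)] by blast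
  have "r * (t / r) = t" "r + (1 - r) * ((t - r) / (1 - r)) = t" for t
    using assms by simp_all
  then show "\<forall>t\<in>{0..1}. \<phi> t = concat_at r (\<phi> \<circ> (\<lambda>t. r * t)) (\<phi> \<circ> (\<lambda>t. r + (1 - r) * t)) t"
    by (simp add: concat_at_def)
qed

definition reparam_closed :: "(real \<Rightarrow> 'a) set \<Rightarrow> bool" where
  "reparam_closed D \<longleftrightarrow> (\<forall>p \<phi>. path_in p D \<and> I1 \<phi> \<longrightarrow> path_in (p \<circ> \<phi>) D)"

definition concat_closed :: "(real \<Rightarrow> 'a) set \<Rightarrow> bool" where
  "concat_closed D \<longleftrightarrow>
     (\<forall>r p q. 0 < r \<and> r < 1 \<and> path_in p D \<and> path_in q D \<and> p 1 = q 0 \<longrightarrow> path_in (concat_at r p q) D)"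

lemma reparam_closedD: "reparam_closed D \<Longrightarrow> path_in p D \<Longrightarrow> I1 \<phi> \<Longrightarrow> path_in (p \<circ> \<phi>) D"
  unfolding reparam_closed_def by blast

lemma concat_closedD:
  "concat_closed D \<Longrightarrow> 0 < r \<Longrightarrow> r < 1 \<Longrightarrow> path_in p D \<Longrightarrow> path_in q D \<Longrightarrow> p 1 = q 0 \<Longrightarrow>
    path_in (concat_at r p q) D"
  unfolding concat_closed_def by blast

lemma reparam_closedI:
  assumes "\<And>d \<phi>. d \<in> D \<Longrightarrow> I1 \<phi> \<Longrightarrow> path_in (d \<circ> \<phi>) D"
  shows "reparam_closed D"
  unfolding reparam_closed_def
proof safe
  fix p \<phi> assume "path_in p D" "I1 \<phi>"
  then obtain d where "d \<in> D" "\<forall>t\<in>{0..1}. p t = d t"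
    unfolding path_in_def by blast
  with assms[of d \<phi>] \<open>I1 \<phi>\<close> show "path_in (p \<circ> \<phi>) D"
    by (subst path_in_cong[of _ "d \<circ> \<phi>"]) (auto dest: I1_range)
qed

lemma concat_closedI:
  assumes "\<And>r d e. 0 < r \<Longrightarrow> r < 1 \<Longrightarrow> d \<in> D \<Longrightarrow> e \<in> D \<Longrightarrow> d 1 = e 0 \<Longrightarrow>
    path_in (concat_at r d e) D"
  shows "concat_closed D"
  unfolding concat_closed_def
proof safe
  fix r :: real and p q assume r: "0 < r" "r < 1" and "path_in p D" "path_in q D" "p 1 = q 0"
  then obtain d e where "d \<in> D" "\<forall>t\<in>{0..1}. p t = d t" "e \<in> D" "\<forall>t\<in>{0..1}. q t = e t"
    unfolding path_in_def by blast
  moreover have "\<forall>t\<in>{0..1}. concat_at r p q t = concat_at r d e t"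
    by (rule concat_at_cong[OF r]) fact+
  ultimately show "path_in (concat_at r p q) D"
    using assms[of r d e] r \<open>p 1 = q 0\<close> path_in_cong by fastforce
qed

lemma concat_closed_if_ncomp:
  assumes "reparam_closed D"
    and ncomp: "\<And>d e. d \<in> D \<Longrightarrow> e \<in> D \<Longrightarrow> d 1 = e 0 \<Longrightarrow> path_in (ncomp d e) D"
  shows "concat_closed D"
proof (rule concat_closedI)
  fix r :: real and d e
  assume r: "0 < r" "r < 1" and "d \<in> D" "e \<in> D" "d 1 = e 0"
  have "I1 (\<lambda>t. t / 2)" "I1 (\<lambda>t. (t + 1) / 2)"
    using I1_affine[of 0 "1/2"] I1_affine[of "1/2" 1] by (simp_all add: field_simps)
  then have "I1 (concat_at r (\<lambda>t. t / 2) (\<lambda>t. (t + 1) / 2))"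
    using r by (intro I1_concat_at) auto
  then have "path_in (ncomp d e \<circ> concat_at r (\<lambda>t. t / 2) (\<lambda>t. (t + 1) / 2)) D"
    using assms \<open>d \<in> D\<close> \<open>e \<in> D\<close> \<open>d 1 = e 0\<close> by (blast intro: reparam_closedD)
  then have "path_in (concat_at r (ncomp d e \<circ> (\<lambda>t. t / 2)) (ncomp d e \<circ> (\<lambda>t. (t + 1) / 2))) D"
    by (simp add: comp_concat_at)
  moreover have "\<forall>t\<in>{0..1}.
      concat_at r (ncomp d e \<circ> (\<lambda>t. t / 2)) (ncomp d e \<circ> (\<lambda>t. (t + 1) / 2)) t = concat_at r d e t"
    by (rule concat_at_cong[OF r]) (use \<open>d 1 = e 0\<close> in \<open>auto simp: ncomp_def field_simps\<close>)
  ultimately show "path_in (concat_at r d e) D"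
    using path_in_cong by blast
qed

lemma path_in_concat_at_reparam_left:
  assumes "0 < s" "I1 \<psi>" "\<forall>t\<in>{0..1}. \<psi> t \<le> s"
    and a: "\<And>\<phi>. I1 \<phi> \<Longrightarrow> path_in (a \<circ> \<phi>) D"
  shows "path_in (concat_at s a b \<circ> \<psi>) D"
proof -
  have "I1 (\<lambda>t. (\<psi> t - 0) / (s - 0))"
    using assms by (intro I1_normalize) (auto dest: I1_range)
  then have "path_in (a \<circ> (\<lambda>t. \<psi> t / s)) D"
    using a by simp
  moreover have "\<forall>t\<in>{0..1}. (concat_at s a b \<circ> \<psi>) t = (a \<circ> (\<lambda>t. \<psi> t / s)) t"
    using assms(3) by (simp add: concat_at_def)
  ultimately show ?thesis
    using path_in_cong by blast
qed

lemma path_in_concat_at_reparam_right: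
  assumes "0 < s" "s < 1" "a 1 = b 0" "I1 \<psi>" "\<forall>t\<in>{0..1}. s \<le> \<psi> t"
    and b: "\<And>\<phi>. I1 \<phi> \<Longrightarrow> path_in (b \<circ> \<phi>) D"
  shows "path_in (concat_at s a b \<circ> \<psi>) D"
proof -
  have "I1 (\<lambda>t. (\<psi> t - s) / (1 - s))"
    using assms by (intro I1_normalize) (auto dest: I1_range)
  then have "path_in (b \<circ> (\<lambda>t. (\<psi> t - s) / (1 - s))) D"
    using b by simp
  moreover have "\<forall>t\<in>{0..1}. (concat_at s a b \<circ> \<psi>) t = (b \<circ> (\<lambda>t. (\<psi> t - s) / (1 - s))) t"
    using assms(1,3,5) by (auto simp: concat_at_def)
  ultimately show ?thesis
    using path_in_cong by blast
qed

lemma path_in_concat_at_reparam: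
  assumes D: "concat_closed D" and s: "0 < s" "s < 1" and "a 1 = b 0"
    and a: "\<And>\<phi>. I1 \<phi> \<Longrightarrow> path_in (a \<circ> \<phi>) D"
    and b: "\<And>\<phi>. I1 \<phi> \<Longrightarrow> path_in (b \<circ> \<phi>) D"
    and "I1 \<phi>"
  shows "path_in (concat_at s a b \<circ> \<phi>) D"
proof -
  note left = path_in_concat_at_reparam_left[OF s(1) _ _ a]
  note right = path_in_concat_at_reparam_right[of s a b _ D, OF s \<open>a 1 = b 0\<close> _ _ b]
  consider "\<phi> 1 \<le> s" | "s \<le> \<phi> 0" | "\<phi> 0 < s" "s < \<phi> 1"
    by linarith
  then show ?thesis
  proof cases
    case 1
    then show ?thesis
      using \<open>I1 \<phi>\<close> by (intro left) (auto dest: I1_mono[of \<phi> _ 1])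
  next
    case 2
    then show ?thesis
      using \<open>I1 \<phi>\<close> by (intro right) (auto dest: I1_mono[of \<phi> 0])
  next
    case 3
    \<comment> \<open>Split \<open>\<phi>\<close> at a point \<open>r\<close> with \<open>\<phi> r = s\<close>; each half stays on one side of \<open>s\<close>.\<close>
    obtain r where r: "0 \<le> r" "r \<le> 1" "\<phi> r = s"
      using IVT'[of \<phi> 0 s 1] 3 \<open>I1 \<phi>\<close> by (auto simp: I1_def)
    with 3 have r01: "0 < r" "r < 1"
      by (auto simp: less_le)
    note split = I1_split_at[OF \<open>I1 \<phi>\<close> r01, unfolded \<open>\<phi> r = s\<close>]
    define k1 where "k1 = \<phi> \<circ> (\<lambda>t. r * t)"
    define k2 where "k2 = \<phi> \<circ> (\<lambda>t. r + (1 - r) * t)"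
    have k: "I1 k1" "I1 k2" "\<forall>t\<in>{0..1}. k1 t \<le> s" "\<forall>t\<in>{0..1}. s \<le> k2 t"
      using split(1-4) by (simp_all add: k1_def k2_def)
    have agree: "\<forall>t\<in>{0..1}. \<phi> t = concat_at r k1 k2 t"
      using split(5) unfolding k1_def k2_def .
    from left[OF k(1,3)] right[OF k(2,4)]
    have "path_in (concat_at s a b \<circ> k1) D" "path_in (concat_at s a b \<circ> k2) D"
      by simp_all
    then have "path_in (concat_at s a b \<circ> concat_at r k1 k2) D"
      using concat_closedD[OF D r01] r by (simp add: comp_concat_at k1_def k2_def)
    moreover have "\<forall>t\<in>{0..1}. (concat_at s a b \<circ> \<phi>) t = (concat_at s a b \<circ> concat_at r k1 k2) t"
      using agree by simp
    ultimately show ?thesis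
      using path_in_cong by blast
  qed
qed

lemma path_in_comp_moore:
  assumes "concat_closed D" "moore_chain cs" "\<forall>x\<in>set cs. path_in (f \<circ> fst x) D"
  shows "path_in (f \<circ> moore cs) D"
proof (rule moore_chain_induct[OF assms(2,3)])
  fix l :: real and c \<rho>
  assume "0 < l" "l < 1" "path_in (f \<circ> c) D" "path_in (f \<circ> \<rho>) D" "c 1 = \<rho> 0"
  then show "path_in (f \<circ> concat_at l c \<rho>) D"
    using concat_closedD[OF assms(1)] by (simp add: comp_concat_at)
qed

lemma dspace_reparam_closed: "dspace (T, D) \<Longrightarrow> reparam_closed D"
  by (rule reparam_closedI) (auto simp: dspace_def)

lemma dspace_concat_closed: "dspace (T, D) \<Longrightarrow> concat_closed D"
  by (rule concat_closed_if_ncomp[OF dspace_reparam_closed]) (auto simp: dspace_def)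

definition reparam_path :: "(real \<Rightarrow> 'a) set \<Rightarrow> (real \<Rightarrow> 'a) \<Rightarrow> bool" where
  "reparam_path P c \<longleftrightarrow> (\<exists>\<gamma>\<in>P. \<exists>\<phi>. I1 \<phi> \<and> c = \<gamma> \<circ> \<phi>)"

definition sp_chain :: "(real \<Rightarrow> 'a) set \<Rightarrow> ((real \<Rightarrow> 'a) \<times> real) list \<Rightarrow> bool" where
  "sp_chain P cs \<longleftrightarrow> moore_chain cs \<and> (\<forall>x\<in>set cs. reparam_path P (fst x))"

lemma mem_sp_paths_iff:
  "d \<in> sp_paths T P \<longleftrightarrow> (\<exists>x\<in>topspace T. d = (\<lambda>t. x)) \<or> (\<exists>cs. sp_chain P cs \<and> d = moore cs)"
proof -
  have pieces: "(\<forall>(c, l)\<in>set cs. 0 < l \<and> (\<exists>\<gamma>\<in>P. \<exists>\<phi>. I1 \<phi> \<and> c = \<gamma> \<circ> \<phi>)) \<longleftrightarrow>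
      (\<forall>x\<in>set cs. 0 < snd x) \<and> (\<forall>x\<in>set cs. reparam_path P (fst x))" for cs
    by (simp add: reparam_path_def case_prod_beta ball_conj_distrib)
  show ?thesis
    unfolding sp_paths_def sp_chain_def moore_chain_def pieces by blast
qed

lemma sp_chain_single: "sp_chain P [(c, 1)] \<longleftrightarrow> reparam_path P c"
  by (simp add: sp_chain_def moore_chain_single)

lemma reparam_path_in_sp_paths: "reparam_path P c \<Longrightarrow> c \<in> sp_paths T P"
  unfolding mem_sp_paths_iff by (intro disjI2 exI[of _ "[(c, 1)]"]) (simp add: sp_chain_single)

lemma reparam_path_self: "\<gamma> \<in> P \<Longrightarrow> reparam_path P \<gamma>"
  unfolding reparam_path_def by (intro bexI[of _ \<gamma>] exI[of _ "\<lambda>t. t"]) (simp_all add: I1_id o_def)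

lemma reparam_path_comp:
  assumes "reparam_path P c" "I1 \<psi>"
  shows "reparam_path P (c \<circ> \<psi>)"
proof -
  obtain \<gamma> \<phi> where "\<gamma> \<in> P" "I1 \<phi>" "c = \<gamma> \<circ> \<phi>"
    using assms(1) unfolding reparam_path_def by blast
  then show ?thesis
    unfolding reparam_path_def using assms(2)
    by (intro bexI[of _ \<gamma>] exI[of _ "\<phi> \<circ> \<psi>"]) (simp_all add: I1_comp o_assoc)
qed

lemma reparam_path_const: "reparam_path P c \<Longrightarrow> a \<in> {0..1} \<Longrightarrow> reparam_path P (\<lambda>_. c a)"
  using reparam_path_comp[of P c "\<lambda>_. a"] I1_const by (simp add: o_def)

lemma reparam_path_is_path:
  assumes "\<forall>\<gamma>\<in>P. is_path T \<gamma>" "reparam_path P c"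
  shows "is_path T c"
proof -
  obtain \<gamma> \<phi> where "\<gamma> \<in> P" "I1 \<phi>" "c = \<gamma> \<circ> \<phi>"
    using assms(2) unfolding reparam_path_def by blast
  moreover have "continuous_map (top_of_set {0..1}) T (\<gamma> \<circ> \<phi>)"
    using assms(1) \<open>\<gamma> \<in> P\<close> \<open>I1 \<phi>\<close> by (intro continuous_map_path_comp) (auto simp: I1_def)
  ultimately show ?thesis
    by (simp add: is_path_def)
qed

lemma sp_chain_append:
  assumes "0 < r" "r < 1" "sp_chain P cs1" "sp_chain P cs2" "moore cs1 1 = moore cs2 0"
  shows "sp_chain P (rescale r cs1 @ rescale (1 - r) cs2)"
  using assms moore_chain_append[of r cs1 cs2] by (simp add: sp_chain_def ball_Un)

lemma reparam_path_moore_endpoint: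
  assumes "sp_chain P cs" "u \<in> {0, 1}"
  shows "reparam_path P (\<lambda>_. moore cs u)"
proof -
  have "moore_chain cs" "cs \<noteq> []"
    using assms(1) by (auto simp: sp_chain_def moore_chain_def)
  then have "reparam_path P (fst (hd cs))" "reparam_path P (fst (last cs))"
    using assms(1) by (auto simp: sp_chain_def)
  then have "reparam_path P (\<lambda>_. fst (hd cs) 0)" "reparam_path P (\<lambda>_. fst (last cs) 1)"
    by (auto intro: reparam_path_const[of _ _ 0] reparam_path_const[of _ _ 1])
  then show ?thesis
    using assms(2) moore_chain_ends[OF \<open>moore_chain cs\<close>] by auto
qed

text \<open>Constant paths of \<open>Sp X\<close> at points lying on no execution path are not Moore
  compositions.\<close>
lemma sp_path_moore_if_endpoint:
  assumes "d \<in> sp_paths T P" "sp_chain P cs" "d t = moore cs u" "u \<in> {0, 1}"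
  obtains cs' where "sp_chain P cs'" "d = moore cs'"
proof (cases "\<exists>cs'. sp_chain P cs' \<and> d = moore cs'")
  case False
  with assms(1,3) have "d = (\<lambda>_. moore cs u)"
    by (auto simp: mem_sp_paths_iff)
  then show ?thesis
    using that[of "[(d, 1)]"] reparam_path_moore_endpoint[OF assms(2,4)] by (simp add: sp_chain_single)
qed (use that in blast)

lemma sp_paths_composable_cases:
  assumes d: "d \<in> sp_paths T P" and e: "e \<in> sp_paths T P" and "d 1 = e 0"
  obtains (const) x where "d = (\<lambda>_. x)" "e = (\<lambda>_. x)"
    | (chains) cs1 cs2 where "sp_chain P cs1" "sp_chain P cs2" "d = moore cs1" "e = moore cs2"
proof -
  consider cs1 where "sp_chain P cs1" "d = moore cs1" | cs2 where "sp_chain P cs2" "e = moore cs2"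
    | x y where "d = (\<lambda>_. x)" "e = (\<lambda>_. y)"
    using d e by (auto simp: mem_sp_paths_iff)
  then show thesis
  proof cases
    case 1
    obtain cs2 where "sp_chain P cs2" "e = moore cs2"
      by (rule sp_path_moore_if_endpoint[OF e 1(1), of 0 1]) (use 1 \<open>d 1 = e 0\<close> in auto)
    with 1 show thesis
      using chains by blast
  next
    case 2
    obtain cs1 where "sp_chain P cs1" "d = moore cs1"
      by (rule sp_path_moore_if_endpoint[OF d 2(1), of 1 0]) (use 2 \<open>d 1 = e 0\<close> in auto)
    with 2 show thesis
      using chains by blast
  qed (use const \<open>d 1 = e 0\<close> in simp)
qed

lemma concat_at_sp_paths:
  assumes r: "0 < r" "r < 1" and d: "d \<in> sp_paths T P" and e: "e \<in> sp_paths T P"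
    and "d 1 = e 0"
  shows "concat_at r d e \<in> sp_paths T P"
  using d e \<open>d 1 = e 0\<close>
proof (cases rule: sp_paths_composable_cases)
  case const
  then have "concat_at r d e = d"
    by (simp add: concat_at_def fun_eq_iff)
  with d show ?thesis
    by simp
next
  case (chains cs1 cs2)
  then have "sp_chain P (rescale r cs1 @ rescale (1 - r) cs2)"
    using r \<open>d 1 = e 0\<close> by (intro sp_chain_append) auto
  moreover have "concat_at r d e = moore (rescale r cs1 @ rescale (1 - r) cs2)"
    using chains r by (simp add: concat_at_moore sp_chain_def)
  ultimately show ?thesis
    by (auto simp: mem_sp_paths_iff)
qed

lemma sp_paths_concat_closed: "concat_closed (sp_paths T P)"
  by (rule concat_closedI) (auto intro: path_in_member concat_at_sp_paths)

lemma sp_paths_reparam_closed: "reparam_closed (sp_paths T P)"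
proof (rule reparam_closedI)
  fix d \<phi>
  assume "d \<in> sp_paths T P" "I1 \<phi>"
  then consider x where "d = (\<lambda>_. x)" | cs where "sp_chain P cs" "d = moore cs"
    by (auto simp: mem_sp_paths_iff)
  then show "path_in (d \<circ> \<phi>) (sp_paths T P)"
  proof cases
    case 1
    with \<open>d \<in> sp_paths T P\<close> show ?thesis
      by (simp add: o_def path_in_member)
  next
    case 2
    have "\<forall>\<phi>. I1 \<phi> \<longrightarrow> path_in (moore cs \<circ> \<phi>) (sp_paths T P)"
      using 2(1) unfolding sp_chain_def
    proof (elim conjE moore_chain_induct)
      fix c
      assume "reparam_path P c"
      then show "\<forall>\<phi>. I1 \<phi> \<longrightarrow> path_in (c \<circ> \<phi>) (sp_paths T P)"
        by (intro allI impI path_in_member reparam_path_in_sp_paths reparam_path_comp)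
    next
      fix l :: real and c \<rho>
      assume l: "0 < l" "l < 1" and c: "reparam_path P c" and "c 1 = \<rho> 0"
        and IH: "\<forall>\<phi>. I1 \<phi> \<longrightarrow> path_in (\<rho> \<circ> \<phi>) (sp_paths T P)"
      have "path_in (c \<circ> \<phi>) (sp_paths T P)" if "I1 \<phi>" for \<phi>
        using c that by (intro path_in_member reparam_path_in_sp_paths reparam_path_comp)
      with IH show "\<forall>\<phi>. I1 \<phi> \<longrightarrow> path_in (concat_at l c \<rho> \<circ> \<phi>) (sp_paths T P)"
        using path_in_concat_at_reparam[of "sp_paths T P" l c \<rho>, OF sp_paths_concat_closed l \<open>c 1 = \<rho> 0\<close>] by blast
    qed
    with 2 \<open>I1 \<phi>\<close> show ?thesis
      by blast
  qed
qed

lemma sp_paths_is_path: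
  assumes "\<forall>\<gamma>\<in>P. is_path T \<gamma>" "d \<in> sp_paths T P"
  shows "is_path T d"
proof -
  consider x where "x \<in> topspace T" "d = (\<lambda>_. x)" | cs where "sp_chain P cs" "d = moore cs"
    using assms(2) by (auto simp: mem_sp_paths_iff)
  then show ?thesis
  proof cases
    case 2
    have "is_path T (moore cs)"
      using 2(1) unfolding sp_chain_def
    proof (elim conjE moore_chain_induct)
      fix c
      assume "reparam_path P c"
      with assms(1) show "is_path T c"
        by (rule reparam_path_is_path)
    next
      fix l :: real and c \<rho>
      assume "0 < l" "l < 1" "reparam_path P c" "is_path T \<rho>" "c 1 = \<rho> 0"
      then show "is_path T (concat_at l c \<rho>)"
        using assms(1) by (intro is_path_concat_at) (auto intro: reparam_path_is_path)
    qed
    with 2 show ?thesis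
      by simp
  qed (simp add: is_path_def)
qed

lemma dspace_Sp:
  assumes "mdspace (T, S, P)"
  shows "dspace (T, sp_paths T P)"
proof -
  have "\<forall>\<gamma>\<in>P. is_path T \<gamma>" "delta_generated T"
    using assms by (auto simp: mdspace_def)
  moreover have "(\<lambda>t. x) \<in> sp_paths T P" if "x \<in> topspace T" for x
    using that by (auto simp: mem_sp_paths_iff)
  moreover have "path_in (d \<circ> \<phi>) (sp_paths T P)" if "d \<in> sp_paths T P" "I1 \<phi>" for d \<phi>
    using that sp_paths_reparam_closed[THEN reparam_closedD] path_in_member by blast
  moreover have "path_in (ncomp d e) (sp_paths T P)"
    if "d \<in> sp_paths T P" "e \<in> sp_paths T P" "d 1 = e 0" for d e
    unfolding ncomp_eq_concat_at
    by (rule concat_closedD[OF sp_paths_concat_closed]) (use that in \<open>auto intro: path_in_member\<close>)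
  ultimately show ?thesis
    using sp_paths_is_path by (auto simp: dspace_def path_in_member)
qed

lemma mdspace_Omega:
  assumes "dspace (T, D)"
  shows "mdspace (T, topspace T, D)"
proof -
  have "\<gamma> t \<in> topspace T" if "\<gamma> \<in> D" "t \<in> {0..1}" for \<gamma> t
    using assms that by (auto simp: dspace_def is_path_def continuous_map_def Pi_iff)
  then show ?thesis
    using assms by (auto simp: dspace_def mdspace_def M11_imp_I1)
qed

lemma path_in_comp_sp_path:
  assumes "continuous_map T T' f" "concat_closed D" "\<forall>x\<in>topspace T'. path_in (\<lambda>_. x) D"
    and "\<And>c. reparam_path P c \<Longrightarrow> path_in (f \<circ> c) D" and "d \<in> sp_paths T P"
  shows "path_in (f \<circ> d) D"
  using assms(5)
proof (cases rule: mem_sp_paths_iff[THEN iffD1, THEN disjE])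
  assume "\<exists>x\<in>topspace T. d = (\<lambda>_. x)"
  with assms(1,3) show ?thesis
    by (auto simp: o_def dest: continuous_map_image_subset_topspace)
next
  assume "\<exists>cs. sp_chain P cs \<and> d = moore cs"
  with assms(2,4) show ?thesis
    by (auto simp: sp_chain_def intro: path_in_comp_moore)
qed

lemma dmap_Sp:
  assumes "mdmap (T, S, P) (T', S', P') f"
  shows "dmap (T, sp_paths T P) (T', sp_paths T' P') f"
proof -
  have f: "continuous_map T T' f" and paths: "\<forall>\<gamma>\<in>P. path_in (f \<circ> \<gamma>) P'"
    using assms by (auto simp: mdmap_def)
  have const_paths: "\<forall>x\<in>topspace T'. path_in (\<lambda>_. x) (sp_paths T' P')"
    by (intro ballI path_in_member) (auto simp: mem_sp_paths_iff)
  have reparam: "path_in (f \<circ> c) (sp_paths T' P')" if c: "reparam_path P c" for c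
  proof -
    obtain \<gamma> \<phi> where "\<gamma> \<in> P" "I1 \<phi>" "c = \<gamma> \<circ> \<phi>"
      using c unfolding reparam_path_def by blast
    moreover obtain \<delta> where "\<delta> \<in> P'" "\<forall>t\<in>{0..1}. f (\<gamma> t) = \<delta> t"
      using paths \<open>\<gamma> \<in> P\<close> by (auto simp: path_in_def)
    ultimately have "\<forall>t\<in>{0..1}. (f \<circ> c) t = (\<delta> \<circ> \<phi>) t" "reparam_path P' (\<delta> \<circ> \<phi>)"
      by (auto simp: reparam_path_def dest: I1_range)
    then show ?thesis
      by (metis path_in_cong path_in_member reparam_path_in_sp_paths)
  qed
  show ?thesis
    using f path_in_comp_sp_path[OF f sp_paths_concat_closed const_paths reparam] by (simp add: dmap_def)
qed

lemma mdmap_Omega: "dmap (T, D) (T', D') g \<Longrightarrow> mdmap (T, topspace T, D) (T', topspace T', D') g"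
  unfolding dmap_def mdmap_def by (auto dest: continuous_map_image_subset_topspace)

lemma dmap_Sp_iff_mdmap_Omega:
  assumes X: "mdspace (T, S, P)" and Y: "dspace (T', D)"
  shows "dmap (T, sp_paths T P) (T', D) f \<longleftrightarrow> mdmap (T, S, P) (T', topspace T', D) f"
proof
  assume "dmap (T, sp_paths T P) (T', D) f"
  then have cont: "continuous_map T T' f" and sp: "\<forall>d\<in>sp_paths T P. path_in (f \<circ> d) D"
    by (auto simp: dmap_def)
  have "f ` S \<subseteq> topspace T'"
    using X continuous_map_image_subset_topspace[OF cont] by (auto simp: mdspace_def)
  moreover have "\<forall>\<gamma>\<in>P. path_in (f \<circ> \<gamma>) D"
    using sp by (auto intro: reparam_path_in_sp_paths reparam_path_self)
  ultimately show "mdmap (T, S, P) (T', topspace T', D) f"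
    using cont by (simp add: mdmap_def)
next
  assume "mdmap (T, S, P) (T', topspace T', D) f"
  then have cont: "continuous_map T T' f" and paths: "\<forall>\<gamma>\<in>P. path_in (f \<circ> \<gamma>) D"
    by (auto simp: mdmap_def)
  have const_paths: "\<forall>x\<in>topspace T'. path_in (\<lambda>_. x) D"
    using Y by (simp add: dspace_def)
  have reparam: "path_in (f \<circ> c) D" if "reparam_path P c" for c
    using that paths reparam_closedD[OF dspace_reparam_closed[OF Y]]
    by (auto simp: reparam_path_def o_assoc)
  show "dmap (T, sp_paths T P) (T', D) f"
    using cont path_in_comp_sp_path[OF cont dspace_concat_closed[OF Y] const_paths reparam]
    by (simp add: dmap_def)
qed

theorem theorem3p5:
  fixes X :: "'a mdspace" and Y :: "'b dspace"
  assumes "mdspace X" and "dspace Y"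
  shows "dspace (Sp X) \<and> mdspace (Omega Y)
    \<and> (\<forall>(X' :: 'c mdspace) f. mdspace X' \<and> mdmap X X' f \<longrightarrow> dmap (Sp X) (Sp X') f)
    \<and> (\<forall>(Y' :: 'd dspace) g. dspace Y' \<and> dmap Y Y' g \<longrightarrow> mdmap (Omega Y) (Omega Y') g)
    \<and> (\<forall>f :: 'a \<Rightarrow> 'b. dmap (Sp X) Y f \<longleftrightarrow> mdmap X (Omega Y) f)"
proof -
  obtain T S P where X: "X = (T, S, P)"
    by (cases X)
  obtain T' D where Y: "Y = (T', D)"
    by (cases Y)
  have "dmap (Sp X) (Sp X') f" if "mdmap X X' f" for X' :: "'c mdspace" and f
    using that dmap_Sp by (cases X') (auto simp: X Sp_def)
  moreover have "mdmap (Omega Y) (Omega Y') g" if "dmap Y Y' g" for Y' :: "'d dspace" and g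
    using that mdmap_Omega by (cases Y') (auto simp: Y Omega_def)
  moreover have X': "mdspace (T, S, P)" and Y': "dspace (T', D)"
    using assms by (simp_all add: X Y)
  ultimately show ?thesis
    using dspace_Sp[OF X'] mdspace_Omega[OF Y'] dmap_Sp_iff_mdmap_Omega[OF X' Y']
    by (simp add: X Y Sp_def Omega_def)
qed

end
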